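(* Let $m$ be a prime power and let $l,s,t$ be positive integers such that $m\geq l-1$ and $2t-1\leq l$. Define $q=(s-1)m+1$. Suppose that $c\geq t$ is an integer such that $l=c(t-1)+r$ for some $r\in\{t,t+1,\ldots,c\}$. If there exists an $s$-ary $c$-frameproof code of length $l$ and cardinality $M$ satisfying Property $P(t)$, then there exists a $q$-ary $c$-frameproof code of length $l$ and cardinality $Mm^t$.
   Context: Let $F$ be a finite alphabet and $l$ a positive integer. For $P\subseteq F^l$, the set of descendants is $desc(P)=\{x\in F^l: \text{for every } i\in\{1,\ldots,l\} \text{ there is } y\in P \text{ with } x_i=y_i\}$. For an integer $c\geq 2$, a $c$-frameproof code is a subset $C\subseteq F^l$ such that $desc(P)\cap C=P$ for every $P\subseteq C$ with $|P|\leq c$. A code is $q$-ary if its alphabet has size $q$. An $s$-ary $c$-frameproof code $C$ of length $l$ over an alphabet $S$ of size $s$ satisfies Property $P(t)$ if there is a special element $\infty\in S$ such that every codeword contains at most $t-1$ coordinates equal to $\infty$, and every codeword is uniquely determined by specifying $t$ of its components that are not equal to $\infty$ (i.e., if $x,y\in C$ and there are $t$ coordinates $j$ with $x_j=y_j\neq\infty$, then $x=y$). *)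

theory Defs
  imports Main "HOL-Number_Theory.Prime_Powers"
begin

definition words :: "'a set \<Rightarrow> nat \<Rightarrow> 'a list set" where
  "words F l = {x. length x = l \<and> set x \<subseteq> F}"

definition desc :: "'a set \<Rightarrow> nat \<Rightarrow> 'a list set \<Rightarrow> 'a list set" where
  "desc F l P = {x \<in> words F l. \<forall>i<l. \<exists>y\<in>P. x ! i = y ! i}"

definition frameproof :: "'a set \<Rightarrow> nat \<Rightarrow> nat \<Rightarrow> 'a list set \<Rightarrow> bool" where
  "frameproof F l c C \<longleftrightarrow> 2 \<le> c \<and> C \<subseteq> words F l \<and>
     (\<forall>P. P \<subseteq> C \<and> card P \<le> c \<longrightarrow> desc F l P \<inter> C = P)"

definition qary_frameproof :: "nat \<Rightarrow> 'a set \<Rightarrow> nat \<Rightarrow> nat \<Rightarrow> 'a list set \<Rightarrow> bool" where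
  "qary_frameproof q F l c C \<longleftrightarrow> finite F \<and> card F = q \<and> frameproof F l c C"

definition property_P :: "nat \<Rightarrow> 'a set \<Rightarrow> nat \<Rightarrow> 'a list set \<Rightarrow> bool" where
  "property_P t S l C \<longleftrightarrow> (\<exists>inf \<in> S.
     (\<forall>x\<in>C. card {j. j < l \<and> x ! j = inf} \<le> t - 1) \<and>
     (\<forall>x\<in>C. \<forall>y\<in>C. (\<exists>J. J \<subseteq> {..<l} \<and> card J = t \<and>
          (\<forall>j\<in>J. x ! j = y ! j \<and> x ! j \<noteq> inf)) \<longrightarrow> x = y))"

end

(*
  Since m = p ^ n is a prime power there is a field with m elements: the roots of X ^ m - X in
  an algebraic closure of Z/p, which are simple and, by the freshman's dream, closed under the
  field operations. Evaluating the polynomials with t coefficients at the m field elements, and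
  taking the leading coefficient as the value at infinity when l = m + 1, gives m ^ t words of
  length l any two of which agree in at most t - 1 coordinates (a doubly extended Reed-Solomon
  code). The new code replaces every entry a \<noteq> \<infinity> of a codeword x of C by the pair
  (a, \<phi> ! j) for such a word \<phi>, an alphabet of (s - 1) m + 1 symbols. Two distinct new words
  agree in at most t - 1 of the at least l - (t - 1) coordinates where the first one is not
  \<infinity>: by Property P(t) if the words of C differ, by the Reed-Solomon distance otherwise.
  Since l - (t - 1) > c (t - 1), no c codewords cover these coordinates of another codeword.
*)

theory Submission
  imports Defs "HOL-Algebra.Algebraic_Closure" "HOL-Number_Theory.Residues"
begin

section \<open>Finite fields\<close>

context cring
begin

lemma binomial_sum_Suc:
  assumes a: "a \<in> carrier R" and b: "b \<in> carrier R"
  shows "(\<Oplus>k\<in>{..Suc n}. [(Suc n choose k)] \<cdot> (a [^] k \<otimes> b [^] (Suc n - k))) =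
    (a \<oplus> b) \<otimes> (\<Oplus>k\<in>{..n}. [(n choose k)] \<cdot> (a [^] k \<otimes> b [^] (n - k)))"
proof -
  define S where "S = (\<Oplus>k\<in>{..n}. [(n choose k)] \<cdot> (a [^] k \<otimes> b [^] (n - k)))"
  define g where "g = (\<lambda>k. [(n choose k)] \<cdot> (a [^] k \<otimes> b [^] (Suc n - k)))"
  define h where "h = (\<lambda>k. [(n choose k)] \<cdot> (a [^] Suc k \<otimes> b [^] (n - k)))"
  define f where "f = (\<lambda>k. [(Suc n choose k)] \<cdot> (a [^] k \<otimes> b [^] (Suc n - k)))"
  have closed: "g \<in> UNIV \<rightarrow> carrier R" "h \<in> UNIV \<rightarrow> carrier R" "f \<in> UNIV \<rightarrow> carrier R"
    using a b by (auto simp: g_def h_def f_def)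
  have "a \<otimes> S = (\<Oplus>k\<in>{..n}. a \<otimes> ([(n choose k)] \<cdot> (a [^] k \<otimes> b [^] (n - k))))"
    unfolding S_def using a b by (simp add: finsum_rdistr)
  also have "\<dots> = (\<Oplus>k\<in>{..n}. h k)"
    using a b by (intro finsum_cong') (auto simp: h_def add_pow_rdistr m_ac)
  finally have h_sum: "a \<otimes> S = (\<Oplus>k\<in>{..n}. h k)" .
  have "b \<otimes> S = (\<Oplus>k\<in>{..n}. b \<otimes> ([(n choose k)] \<cdot> (a [^] k \<otimes> b [^] (n - k))))"
    unfolding S_def using a b by (simp add: finsum_rdistr)
  also have "\<dots> = (\<Oplus>k\<in>{..n}. g k)"
    using a b by (intro finsum_cong') (auto simp: g_def add_pow_rdistr m_ac Suc_diff_le)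
  also have "\<dots> = (\<Oplus>k\<in>{..Suc n}. g k)"
    using closed finsum_Suc[of g n] by (simp add: g_def binomial_eq_0 finsum_closed Pi_iff)
  also have "\<dots> = (\<Oplus>k\<in>{..n}. g (Suc k)) \<oplus> g 0"
    by (rule finsum_Suc2) (use closed in auto)
  finally have g_sum: "b \<otimes> S = (\<Oplus>k\<in>{..n}. g (Suc k)) \<oplus> g 0" .
  have "f 0 = g 0" by (simp add: f_def g_def)
  have pascal: "f (Suc k) = h k \<oplus> g (Suc k)" for k
    using a b by (simp add: f_def h_def g_def add.nat_pow_mult)
  have "(\<Oplus>k\<in>{..Suc n}. f k) = (\<Oplus>k\<in>{..n}. f (Suc k)) \<oplus> f 0"
    by (rule finsum_Suc2) (use closed in auto)
  also have "(\<Oplus>k\<in>{..n}. f (Suc k)) = (\<Oplus>k\<in>{..n}. h k \<oplus> g (Suc k))"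
    using closed by (intro finsum_cong') (auto simp: pascal)
  also have "\<dots> = (\<Oplus>k\<in>{..n}. h k) \<oplus> (\<Oplus>k\<in>{..n}. g (Suc k))"
    using closed by (intro finsum_addf) auto
  also have "\<dots> \<oplus> f 0 = a \<otimes> S \<oplus> b \<otimes> S"
    unfolding h_sum g_sum using closed \<open>f 0 = g 0\<close> by (simp add: a_assoc finsum_closed Pi_iff)
  also have "\<dots> = (a \<oplus> b) \<otimes> S"
    using a b by (simp add: S_def l_distr finsum_closed)
  finally show ?thesis by (simp add: f_def S_def)
qed

lemma binomial_ring:
  assumes "a \<in> carrier R" "b \<in> carrier R"
  shows "(a \<oplus> b) [^] n = (\<Oplus>k\<in>{..n}. [(n choose k)] \<cdot> (a [^] k \<otimes> b [^] (n - k)))"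
proof (induction n)
  case (Suc n)
  thus ?case using assms by (simp add: binomial_sum_Suc m_comm del: finsum_Suc)
qed (use assms in simp)

lemma add_pow_eq_zero_if_char_dvd:
  fixes p k :: nat
  assumes "[p] \<cdot> \<one> = \<zero>" "p dvd k" "y \<in> carrier R"
  shows "[k] \<cdot> y = \<zero>"
proof -
  obtain j where "k = p * j" using assms(2) by blast
  hence "[k] \<cdot> \<one> = [j] \<cdot> ([p] \<cdot> \<one>)" using add.nat_pow_pow[of \<one> j p] by simp
  hence "[k] \<cdot> \<one> = \<zero>" using assms(1) by simp
  thus ?thesis using assms(3) add_pow_ldistr[of \<one> y k] by simp
qed

lemma freshman_dream:
  fixes p :: nat
  assumes p: "Factorial_Ring.prime p" and char: "[p] \<cdot> \<one> = \<zero>" and a: "a \<in> carrier R" and b: "b \<in> carrier R"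
  shows "(a \<oplus> b) [^] p = a [^] p \<oplus> b [^] p"
proof -
  define f where "f k = [(p choose k)] \<cdot> (a [^] k \<otimes> b [^] (p - k))" for k
  have closed: "f \<in> UNIV \<rightarrow> carrier R" using a b by (auto simp: f_def)
  have "p > 1" using p prime_gt_1_nat by blast
  have "f k = \<zero>" if "k \<in> {1..<p}" for k
    using that p dvd_choose_prime[of k p] add_pow_eq_zero_if_char_dvd[OF char] a b
    by (auto simp: f_def)
  hence "(\<Oplus>k\<in>{1..<p}. f k) = \<zero>"
    using finsum_cong'[of "{1..<p}" "{1..<p}" "\<lambda>_. \<zero>" f] by simp
  moreover have "{..p} = insert p (insert 0 {1..<p})" using \<open>p > 1\<close> by auto
  ultimately have "(\<Oplus>k\<in>{..p}. f k) = f p \<oplus> f 0"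
    using closed \<open>p > 1\<close> by (simp add: finsum_insert Pi_iff)
  thus ?thesis using binomial_ring[OF a b, of p] a b by (simp add: f_def a_comm)
qed

lemma freshman_dream_prime_power:
  fixes p n :: nat
  assumes "Factorial_Ring.prime p" "[p] \<cdot> \<one> = \<zero>" "a \<in> carrier R" "b \<in> carrier R"
  shows "(a \<oplus> b) [^] (p ^ n) = a [^] (p ^ n) \<oplus> b [^] (p ^ n)"
proof (induction n)
  case (Suc n)
  have "(a \<oplus> b) [^] (p ^ Suc n) = ((a \<oplus> b) [^] (p ^ n)) [^] p"
    using assms by (simp add: nat_pow_pow mult.commute)
  also have "\<dots> = a [^] (p ^ Suc n) \<oplus> b [^] (p ^ Suc n)"
    using Suc assms by (simp add: freshman_dream nat_pow_pow mult.commute)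
  finally show ?case .
qed (use assms in simp)

end

lemma (in ring_hom_ring) hom_char:
  fixes p :: nat
  assumes "[p] \<cdot>\<^bsub>R\<^esub> \<one>\<^bsub>R\<^esub> = \<zero>\<^bsub>R\<^esub>"
  shows "[p] \<cdot>\<^bsub>S\<^esub> \<one>\<^bsub>S\<^esub> = \<zero>\<^bsub>S\<^esub>"
  using group_hom.hom_nat_pow[OF a_group_hom, of "\<one>\<^bsub>R\<^esub>" p] assms by (simp add: add_pow_def)

lemma card_set_mset_le: "card (set_mset M) \<le> size M"
  using size_mset_mono[OF mset_set_set_mset_msubset[of M]] by simp

lemma size_eq_card_set_mset:
  assumes "\<And>a. count M a \<le> 1"
  shows "size M = card (set_mset M)"
proof -
  have "count M a = count (mset_set (set_mset M)) a" for a
  proof (cases "a \<in># M")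
    case True
    hence "count M a = 1" using assms[of a] by (simp add: Suc_le_eq le_antisym)
    thus ?thesis using True by (simp add: count_mset_set')
  qed (simp add: not_in_iff)
  hence "M = mset_set (set_mset M)" by (rule multiset_eqI)
  thus ?thesis by (metis size_mset_set)
qed

definition (in ring) frobenius_poly :: "nat \<Rightarrow> 'a list" where
  "frobenius_poly q = X [^]\<^bsub>poly_ring R\<^esub> q \<ominus>\<^bsub>poly_ring R\<^esub> X"

context domain
begin

lemma frobenius_poly_closed: "frobenius_poly q \<in> carrier (poly_ring R)"
proof -
  interpret UP: domain "poly_ring R" using univ_poly_is_domain[OF carrier_is_subring] .
  show ?thesis using var_closed(1)[OF carrier_is_subring] by (simp add: frobenius_poly_def)
qed

lemma eval_frobenius_poly:
  assumes "x \<in> carrier R"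
  shows "eval (frobenius_poly q) x = x [^] q \<ominus> x"
proof -
  interpret E: ring_hom_ring "poly_ring R" R "\<lambda>p. eval p x"
    using eval_ring_hom[OF carrier_is_subring assms] .
  show ?thesis
    using var_closed(1)[OF carrier_is_subring] eval_var[OF assms]
    by (simp add: frobenius_poly_def a_minus_def E.hom_nat_pow)
qed

lemma degree_frobenius_poly:
  assumes "2 \<le> q"
  shows "degree (frobenius_poly q) = q"
proof -
  interpret UP: domain "poly_ring R" using univ_poly_is_domain[OF carrier_is_subring] .
  have X: "X \<in> carrier (poly_ring R)" using var_closed(1)[OF carrier_is_subring] .
  have monom: "polynomial (carrier R) (monom \<one> q)" "degree (monom \<one> q) = q"
    by (intro monom_is_polynomial[OF carrier_is_subring]) (auto simp: monom_def)
  have minus_X: "polynomial (carrier R) (\<ominus>\<^bsub>poly_ring R\<^esub> X)" "degree (\<ominus>\<^bsub>poly_ring R\<^esub> X) = 1"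
    using X univ_poly_carrier univ_poly_a_inv_degree[OF carrier_is_subring X] by (auto simp: var_def)
  have "frobenius_poly q = poly_add (monom \<one> q) (\<ominus>\<^bsub>poly_ring R\<^esub> X)"
    unfolding frobenius_poly_def a_minus_def unitary_monom_eq_var_pow[OF carrier_is_subring]
    by (simp only: univ_poly_add)
  moreover have "degree (poly_add (monom \<one> q) (\<ominus>\<^bsub>poly_ring R\<^esub> X)) = max q 1"
    using poly_add_degree_eq[OF carrier_is_subring monom(1) minus_X(1)] monom(2) minus_X(2) assms by simp
  ultimately show ?thesis using assms by simp
qed

text \<open>With \<open>Y = X - a\<close>, the freshman's dream gives \<open>X ^ q - X = Y ^ q + a ^ q - Y - a\<close>.\<close>

lemma frobenius_poly_factor:
  fixes p n :: nat
  assumes p: "Factorial_Ring.prime p" and char: "[p] \<cdot> \<one> = \<zero>"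
    and a: "a \<in> carrier R" and aq: "a [^] (p ^ n) = a"
  shows "frobenius_poly (p ^ n) = [\<one>, \<ominus> a] \<otimes>\<^bsub>poly_ring R\<^esub>
           ([\<one>, \<ominus> a] [^]\<^bsub>poly_ring R\<^esub> (p ^ n - 1) \<ominus>\<^bsub>poly_ring R\<^esub> \<one>\<^bsub>poly_ring R\<^esub>)"
proof -
  interpret UP: domain "poly_ring R" using univ_poly_is_domain[OF carrier_is_subring] .
  interpret H: ring_hom_ring R "poly_ring R" poly_of_const
    using canonical_embedding_is_hom[OF carrier_is_subring]
    by (intro ring_hom_ringI2) (auto intro: ring_axioms UP.ring_axioms)
  define q where "q = p ^ n"
  define Y where "Y = [\<one>, \<ominus> a]"
  define c where "c = poly_of_const a"
  have Y: "Y \<in> carrier (poly_ring R)"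
    using a by (auto simp: Y_def univ_poly_carrier[symmetric] polynomial_def)
  have c: "c \<in> carrier (poly_ring R)" using a by (simp add: c_def)
  have X: "X = Y \<oplus>\<^bsub>poly_ring R\<^esub> c"
    using a by (cases "a = \<zero>") (simp_all add: Y_def c_def var_def poly_of_const_def univ_poly_add l_neg)
  have "frobenius_poly q = (Y \<oplus>\<^bsub>poly_ring R\<^esub> c) [^]\<^bsub>poly_ring R\<^esub> q \<ominus>\<^bsub>poly_ring R\<^esub> (Y \<oplus>\<^bsub>poly_ring R\<^esub> c)"
    by (simp add: frobenius_poly_def X)
  also have "\<dots> = (Y [^]\<^bsub>poly_ring R\<^esub> q \<oplus>\<^bsub>poly_ring R\<^esub> c) \<ominus>\<^bsub>poly_ring R\<^esub> (Y \<oplus>\<^bsub>poly_ring R\<^esub> c)"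
    using UP.freshman_dream_prime_power[OF p H.hom_char[OF char] Y c, of n] H.hom_nat_pow[of a q] a aq
    by (simp add: c_def q_def)
  also have "\<dots> = Y [^]\<^bsub>poly_ring R\<^esub> q \<ominus>\<^bsub>poly_ring R\<^esub> Y"
    using Y c UP.nat_pow_closed[OF Y, of q] by algebra
  also have "\<dots> = Y \<otimes>\<^bsub>poly_ring R\<^esub> (Y [^]\<^bsub>poly_ring R\<^esub> (q - 1) \<ominus>\<^bsub>poly_ring R\<^esub> \<one>\<^bsub>poly_ring R\<^esub>)"
  proof -
    have "q = Suc (q - 1)" using p by (simp add: q_def prime_gt_0_nat)
    hence "Y [^]\<^bsub>poly_ring R\<^esub> q = Y \<otimes>\<^bsub>poly_ring R\<^esub> Y [^]\<^bsub>poly_ring R\<^esub> (q - 1)"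
      using Y UP.nat_pow_Suc2[of Y "q - 1"] by simp
    thus ?thesis using Y UP.nat_pow_closed[OF Y, of "q - 1"] by algebra
  qed
  finally show ?thesis by (simp add: q_def Y_def)
qed

text \<open>At a root \<open>a\<close> the factor \<open>Y ^ (q - 1) - 1\<close> takes the value \<open>-1\<close>, so \<open>Y ^ 2\<close> does not divide
  \<open>X ^ q - X = Y (Y ^ (q - 1) - 1)\<close>.\<close>

lemma alg_mult_frobenius_poly_le_1:
  fixes p n :: nat
  assumes p: "Factorial_Ring.prime p" and char: "[p] \<cdot> \<one> = \<zero>" and "n > 0"
  shows "alg_mult (frobenius_poly (p ^ n)) a \<le> 1"
proof (rule ccontr)
  interpret UP: domain "poly_ring R" using univ_poly_is_domain[OF carrier_is_subring] .
  define P where "P = frobenius_poly (p ^ n)"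
  define Y where "Y = [\<one>, \<ominus> a]"
  define Z where "Z = Y [^]\<^bsub>poly_ring R\<^esub> (p ^ n - 1) \<ominus>\<^bsub>poly_ring R\<^esub> \<one>\<^bsub>poly_ring R\<^esub>"
  have P: "P \<in> carrier (poly_ring R)" by (simp add: P_def frobenius_poly_closed)
  assume "\<not> alg_mult (frobenius_poly (p ^ n)) a \<le> 1"
  hence mult: "2 \<le> alg_mult P a" by (simp add: P_def)
  hence a: "a \<in> carrier R" by (auto simp: alg_mult_def split: if_splits)
  have "is_root P a" using alg_mult_gt_zero_iff_is_root[OF P, of a] mult by linarith
  hence "a [^] (p ^ n) = a" using a eval_frobenius_poly P by (auto simp: is_root_def P_def)
  hence P_factor: "P = Y \<otimes>\<^bsub>poly_ring R\<^esub> Z"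
    unfolding P_def Y_def Z_def by (rule frobenius_poly_factor[OF p char a])
  have Y: "Y \<in> carrier (poly_ring R)"
    using a by (auto simp: Y_def univ_poly_carrier[symmetric] polynomial_def)
  hence Z: "Z \<in> carrier (poly_ring R)" by (simp add: Z_def)
  interpret E: ring_hom_ring "poly_ring R" R "\<lambda>f. eval f a"
    using eval_ring_hom[OF carrier_is_subring a] .
  have "1 < p ^ n" using p \<open>n > 0\<close> prime_gt_1_nat one_less_power by blast
  moreover have "eval Y a = \<zero>" using a by (simp add: Y_def r_neg)
  ultimately have eval_Z: "eval Z a = \<ominus> \<one>"
    using Y by (simp add: Z_def a_minus_def E.hom_nat_pow nat_pow_zero)
  hence "Z \<noteq> []" by (metis eval.simps(1) minus_minus minus_zero one_closed one_not_zero)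
  have "Y [^]\<^bsub>poly_ring R\<^esub> (2::nat) pdivides P"
    unfolding Y_def by (rule le_alg_mult_imp_pdivides[OF a P mult])
  hence "(Y \<otimes>\<^bsub>poly_ring R\<^esub> Y) pdivides (Y \<otimes>\<^bsub>poly_ring R\<^esub> Z)"
    using Y unfolding P_factor by (simp only: numeral_2_eq_2 UP.nat_pow_Suc UP.nat_pow_0 UP.l_one)
  moreover have "Y \<noteq> \<zero>\<^bsub>poly_ring R\<^esub>" by (simp add: Y_def univ_poly_zero)
  ultimately have "Y pdivides Z"
    unfolding pdivides_def using Y Z UP.mult_divides by blast
  hence "is_root Z a" unfolding Y_def by (rule pdivides_imp_is_root[OF \<open>Z \<noteq> []\<close> a])
  thus False using eval_Z by (simp add: is_root_def)
qed

end

lemma (in field) fixed_points_subfield: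
  fixes p n :: nat
  assumes p: "Factorial_Ring.prime p" and char: "[p] \<cdot> \<one> = \<zero>" and "n > 0"
  shows "subfield {x \<in> carrier R. x [^] (p ^ n) = x} R" (is "subfield ?S R")
proof (rule subfieldI')
  define q where "q = p ^ n"
  have "q > 0" using p by (simp add: q_def prime_gt_0_nat)
  have add: "(a \<oplus> b) [^] q = a [^] q \<oplus> b [^] q" if "a \<in> carrier R" "b \<in> carrier R" for a b
    unfolding q_def by (rule freshman_dream_prime_power[OF p char that])
  have neg: "(\<ominus> a) [^] q = \<ominus> (a [^] q)" if a: "a \<in> carrier R" for a
  proof -
    have "a [^] q \<oplus> (\<ominus> a) [^] q = \<zero>"
      using add[of a "\<ominus> a"] a \<open>q > 0\<close> by (simp add: r_neg nat_pow_zero)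
    thus ?thesis using a by (metis minus_equality a_comm nat_pow_closed a_inv_closed)
  qed
  show "subring ?S R"
    using add neg by (intro subringI) (auto simp: q_def nat_pow_distrib)
  show "inv k \<in> ?S" if "k \<in> ?S - {\<zero>}" for k
  proof -
    have k: "k \<in> Units R" "k [^] q = k" using that by (auto simp: field_Units q_def)
    have "k \<otimes> inv k [^] q = \<one>"
      using nat_pow_distrib[of k "inv k" q] k Units_closed[OF k(1)] by simp
    hence "inv k = inv k [^] q" using k by (intro comm_inv_char) auto
    thus ?thesis using k by (simp add: q_def)
  qed
qed

lemma (in algebraically_closed) card_fixed_points:
  fixes p n :: nat
  assumes p: "Factorial_Ring.prime p" and char: "[p] \<cdot> \<one> = \<zero>" and "n > 0"
  shows "finite {x \<in> carrier L. x [^] (p ^ n) = x}" "card {x \<in> carrier L. x [^] (p ^ n) = x} = p ^ n"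
proof -
  define P where "P = frobenius_poly (p ^ n)"
  have P: "P \<in> carrier (poly_ring L)" by (simp add: P_def frobenius_poly_closed)
  have "2 \<le> p ^ n" using p \<open>n > 0\<close> prime_gt_1_nat
    by (metis One_nat_def Suc_1 Suc_leI one_less_power)
  hence deg: "degree P = p ^ n" unfolding P_def by (rule degree_frobenius_poly)
  hence "P \<noteq> []" using \<open>2 \<le> p ^ n\<close> \<open>n > 0\<close> by (auto simp: zero_power)
  have "x \<in># roots P \<longleftrightarrow> x \<in> carrier L \<and> x [^] (p ^ n) = x" for x
    using roots_mem_iff_is_root[OF P, of x] eval_frobenius_poly[of x] \<open>P \<noteq> []\<close>
    by (auto simp: is_root_def P_def r_right_minus_eq)
  hence roots: "set_mset (roots P) = {x \<in> carrier L. x [^] (p ^ n) = x}" by blast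
  show "finite {x \<in> carrier L. x [^] (p ^ n) = x}" unfolding roots[symmetric] by simp
  have "size (roots P) = p ^ n"
    using roots_over_carrier[OF P] deg by (simp add: splitted_def)
  moreover have "count (roots P) a \<le> 1" for a
    using alg_mult_eq_count_roots[OF P] alg_mult_frobenius_poly_le_1[OF assms] by (metis P_def)
  ultimately show "card {x \<in> carrier L. x [^] (p ^ n) = x} = p ^ n"
    unfolding roots[symmetric] using size_eq_card_set_mset by metis
qed

lemma (in residues) add_pow_one: "[k] \<cdot> \<one> = int k mod m"
proof (induction k)
  case (Suc k)
  thus ?case by (simp add: add.nat_pow_Suc res_one_eq res_add_eq mod_add_right_eq add.commute)
qed (simp add: res_zero_eq)

text \<open>The carrier type is that of the algebraic closure built in HOL-Algebra.\<close>

lemma finite_field_exists: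
  fixes p n :: nat
  assumes p: "Factorial_Ring.prime p" and "n > 0"
  shows "\<exists>R :: ((int list \<times> nat) multiset \<Rightarrow> int) ring.
           field R \<and> finite (carrier R) \<and> card (carrier R) = p ^ n"
proof -
  interpret K: residues_prime p "residue_ring (int p)" by unfold_locales (rule p)
  have char_K: "[p] \<cdot>\<^bsub>residue_ring (int p)\<^esub> \<one>\<^bsub>residue_ring (int p)\<^esub> = \<zero>\<^bsub>residue_ring (int p)\<^esub>"
    by (simp add: K.add_pow_one K.res_zero_eq)
  define L where "L = K.alg_closure"
  interpret L: algebraic_closure L "K.indexed_const ` carrier (residue_ring (int p))"
    unfolding L_def by (rule K.alg_closureE(1))
  interpret H: ring_hom_ring "residue_ring (int p)" L K.indexed_const
    using K.alg_closureE(2)[folded L_def] by (intro ring_hom_ringI2) (auto intro: K.ring_axioms L.ring_axioms)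
  have "[p] \<cdot>\<^bsub>L\<^esub> \<one>\<^bsub>L\<^esub> = \<zero>\<^bsub>L\<^esub>" by (rule H.hom_char[OF char_K])
  hence "field (L\<lparr>carrier := {x \<in> carrier L. x [^]\<^bsub>L\<^esub> (p ^ n) = x}\<rparr>)"
    and "finite {x \<in> carrier L. x [^]\<^bsub>L\<^esub> (p ^ n) = x}"
    and "card {x \<in> carrier L. x [^]\<^bsub>L\<^esub> (p ^ n) = x} = p ^ n"
    using L.subfield_iff(2)[OF L.fixed_points_subfield] L.card_fixed_points p \<open>n > 0\<close> by auto
  thus ?thesis unfolding L_def by (intro exI[of _ "K.alg_closure\<lparr>carrier := _\<rparr>"]) simp
qed

section \<open>Reed-Solomon codes\<close>

definition agreements :: "nat \<Rightarrow> 'a list \<Rightarrow> 'a list \<Rightarrow> nat set" where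
  "agreements l x y = {j. j < l \<and> x ! j = y ! j}"

lemma finite_agreements [simp]: "finite (agreements l x y)"
  by (simp add: agreements_def)

lemma agreements_map:
  assumes "inj_on f A" "x \<in> words A l" "y \<in> words A l"
  shows "agreements l (map f x) (map f y) = agreements l x y"
  using assms nth_mem by (fastforce simp: agreements_def words_def dest: inj_onD)

lemma words_iff_nth: "x \<in> words A l \<longleftrightarrow> length x = l \<and> (\<forall>j<l. x ! j \<in> A)"
  by (auto simp: words_def in_set_conv_nth intro: nth_mem)

lemma finite_words: "finite F \<Longrightarrow> finite (words F l)"
  using finite_lists_length_eq[of F l] by (simp add: words_def conj_commute)

lemma card_words: "finite F \<Longrightarrow> card (words F l) = card F ^ l"
  using card_lists_length_eq[of F l] by (simp add: words_def conj_commute)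

context field
begin

text \<open>The difference of the normalized coefficient lists is a nonzero polynomial of degree at most
  \<open>length cs - 1\<close>, so its roots bound the number of agreements.\<close>

lemma card_eval_eq_le:
  assumes cs: "set cs \<subseteq> carrier R" and ds: "set ds \<subseteq> carrier R"
    and "length cs = length ds" "cs \<noteq> ds"
  shows "finite {x \<in> carrier R. eval cs x = eval ds x}"
    and "card {x \<in> carrier R. eval cs x = eval ds x} \<le> length cs - 1"
proof -
  interpret UP: domain "poly_ring R" using univ_poly_is_domain[OF carrier_is_subring] .
  define P where "P = normalize cs \<ominus>\<^bsub>poly_ring R\<^esub> normalize ds"
  have ncs: "normalize cs \<in> carrier (poly_ring R)" and nds: "normalize ds \<in> carrier (poly_ring R)"
    using cs ds normalize_gives_polynomial univ_poly_carrier by blast+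
  hence P: "P \<in> carrier (poly_ring R)" by (simp add: P_def)
  have "normalize cs \<noteq> normalize ds"
    using normalize_def'(1)[of cs] normalize_def'(1)[of ds] normalize_def'(2)[of cs] normalize_def'(2)[of ds]
      assms(3,4) by metis
  hence "P \<noteq> []" using UP.r_right_minus_eq[OF ncs nds] by (simp add: P_def univ_poly_zero)
  have "degree P \<le> max (degree (normalize cs)) (degree (\<ominus>\<^bsub>poly_ring R\<^esub> normalize ds))"
    using poly_add_degree by (simp add: P_def a_minus_def univ_poly_add)
  also have "\<dots> \<le> length cs - 1"
    using univ_poly_a_inv_degree[OF carrier_is_subring nds] normalize_length_le[of cs]
      normalize_length_le[of ds] assms(3) by (simp add: diff_le_mono)
  finally have deg: "degree P \<le> length cs - 1" .
  have roots: "{x \<in> carrier R. eval cs x = eval ds x} \<subseteq> set_mset (roots P)"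
  proof
    fix x assume x: "x \<in> {x \<in> carrier R. eval cs x = eval ds x}"
    interpret E: ring_hom_ring "poly_ring R" R "\<lambda>p. eval p x"
      using eval_ring_hom[OF carrier_is_subring] x by simp
    have "eval P x = eval cs x \<ominus> eval ds x"
      using ncs nds cs ds x by (simp add: P_def a_minus_def eval_normalize)
    hence "is_root P x" using x \<open>P \<noteq> []\<close> cs ds eval_in_carrier by (simp add: is_root_def r_neg)
    thus "x \<in> set_mset (roots P)" using roots_mem_iff_is_root[OF P] by simp
  qed
  thus "finite {x \<in> carrier R. eval cs x = eval ds x}" by (rule finite_subset) simp
  from roots have "card {x \<in> carrier R. eval cs x = eval ds x} \<le> card (set_mset (roots P))"
    by (intro card_mono) auto
  also have "\<dots> \<le> degree P" using card_set_mset_le size_roots_le_degree[OF P] le_trans by blast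
  finally show "card {x \<in> carrier R. eval cs x = eval ds x} \<le> length cs - 1" using deg by simp
qed

lemma eval_Cons_eq_iff:
  assumes "a \<in> carrier R" "set cs \<subseteq> carrier R" "set ds \<subseteq> carrier R" "length cs = length ds"
    "x \<in> carrier R"
  shows "eval (a # cs) x = eval (a # ds) x \<longleftrightarrow> eval cs x = eval ds x"
proof -
  have A: "a \<otimes> x [^] length cs \<in> carrier R" using assms by simp
  have E: "eval cs x \<in> carrier R" "eval ds x \<in> carrier R" using assms eval_in_carrier by auto
  have "eval (a # cs) x = eval cs x \<oplus> a \<otimes> x [^] length cs"
    and "eval (a # ds) x = eval ds x \<oplus> a \<otimes> x [^] length cs"
    using A E assms(4) by (simp_all add: a_comm)
  thus ?thesis using A E by simp
qed

lemma card_eval_eq_at_points_le: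
  assumes "set xs \<subseteq> carrier R" "distinct xs"
    and "set cs \<subseteq> carrier R" "set ds \<subseteq> carrier R" "length cs = length ds" "cs \<noteq> ds"
  shows "card {j. j < length xs \<and> eval cs (xs ! j) = eval ds (xs ! j)} \<le> length cs - 1"
proof -
  let ?G = "{j. j < length xs \<and> eval cs (xs ! j) = eval ds (xs ! j)}"
  have "card ?G = card ((!) xs ` ?G)"
    using assms(2) by (intro card_image[symmetric] inj_on_nth) auto
  also have "\<dots> \<le> card {x \<in> carrier R. eval cs x = eval ds x}"
  proof (rule card_mono)
    show "(!) xs ` ?G \<subseteq> {x \<in> carrier R. eval cs x = eval ds x}"
      using assms(1) nth_mem[of _ xs] by blast
  qed (rule card_eval_eq_le(1)[OF assms(3-6)])
  finally show ?thesis using card_eval_eq_le(2)[OF assms(3-6)] by linarith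
qed

text \<open>The values at the points \<open>xs\<close>, followed by the leading coefficient as the value at
  infinity.\<close>

definition (in ring) rs_word :: "'a list \<Rightarrow> nat \<Rightarrow> 'a list \<Rightarrow> 'a list" where
  "rs_word xs l cs = take l (map (eval cs) xs @ [hd cs])"

lemma rs_word_nth:
  "j < l \<Longrightarrow> l \<le> length xs + 1 \<Longrightarrow>
    rs_word xs l cs ! j = (if j < length xs then eval cs (xs ! j) else hd cs)"
  by (auto simp: rs_word_def nth_append)

lemma rs_word_in_words:
  assumes "set xs \<subseteq> carrier R" "l \<le> length xs + 1" "cs \<in> words (carrier R) t" "0 < t"
  shows "rs_word xs l cs \<in> words (carrier R) l"
proof -
  have "hd cs \<in> carrier R" "set cs \<subseteq> carrier R"
    using assms(3,4) hd_in_set[of cs] by (auto simp: words_def)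
  moreover have "xs ! j \<in> carrier R" if "j < length xs" for j
    using assms(1) nth_mem[OF that] by blast
  ultimately have "rs_word xs l cs ! j \<in> carrier R" if "j < l" for j
    using rs_word_nth[OF that assms(2)] eval_in_carrier by simp
  moreover have "length (rs_word xs l cs) = l" using assms(2) by (simp add: rs_word_def)
  ultimately show ?thesis by (simp add: words_iff_nth)
qed

text \<open>Agreeing at infinity means that the leading coefficients cancel in the difference, which
  then has one coefficient less.\<close>

lemma card_agreements_rs_word:
  assumes xs: "set xs \<subseteq> carrier R" "distinct xs" "l \<le> length xs + 1"
    and cs: "cs \<in> words (carrier R) t" and ds: "ds \<in> words (carrier R) t" and "cs \<noteq> ds" "0 < t"
  shows "card (agreements l (rs_word xs l cs) (rs_word xs l ds)) \<le> t - 1"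
proof -
  define G where "G cs ds = {j. j < length xs \<and> eval cs (xs ! j) = eval ds (xs ! j)}" for cs ds
  have cs': "set cs \<subseteq> carrier R" "length cs = t" and ds': "set ds \<subseteq> carrier R" "length ds = t"
    using cs ds by (auto simp: words_def)
  have sub: "agreements l (rs_word xs l cs) (rs_word xs l ds) \<subseteq> G cs ds \<union> {j. j = length xs \<and> hd cs = hd ds}"
    using xs(3) by (auto simp: agreements_def G_def rs_word_nth split: if_splits)
  show ?thesis
  proof (cases "hd cs = hd ds")
    case False
    hence "card (agreements l (rs_word xs l cs) (rs_word xs l ds)) \<le> card (G cs ds)"
      using sub by (intro card_mono) (auto simp: G_def)
    thus ?thesis using card_eval_eq_at_points_le[OF xs(1,2) cs'(1) ds'(1)] cs'(2) ds'(2) \<open>cs \<noteq> ds\<close>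
      by (simp add: G_def)
  next
    case True
    obtain a cs\<^sub>0 ds\<^sub>0 where a: "cs = a # cs\<^sub>0" "ds = a # ds\<^sub>0"
      using cs'(2) ds'(2) True \<open>0 < t\<close> by (cases cs; cases ds) auto
    have tails: "set cs\<^sub>0 \<subseteq> carrier R" "set ds\<^sub>0 \<subseteq> carrier R" "length cs\<^sub>0 = length ds\<^sub>0"
      "length cs\<^sub>0 = t - 1" "cs\<^sub>0 \<noteq> ds\<^sub>0" "a \<in> carrier R"
      using cs' ds' \<open>cs \<noteq> ds\<close> by (auto simp: a)
    have "G cs ds = G cs\<^sub>0 ds\<^sub>0"
      unfolding a G_def using eval_Cons_eq_iff[OF tails(6,1,2,3)] xs(1) nth_mem[of _ xs] by blast
    hence "card (G cs ds) \<le> length cs\<^sub>0 - 1"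
      using card_eval_eq_at_points_le[OF xs(1,2) tails(1,2,3,5)] by (simp add: G_def)
    moreover have "length cs\<^sub>0 \<noteq> 0" using tails(3,5) by auto
    ultimately have "card (G cs ds) + 1 \<le> t - 1" using tails(4) by linarith
    moreover have "card (agreements l (rs_word xs l cs) (rs_word xs l ds)) \<le> card (insert (length xs) (G cs ds))"
      using sub by (intro card_mono) (auto simp: G_def)
    ultimately show ?thesis using card_insert_le[of "G cs ds" "length xs"] by (simp add: G_def)
  qed
qed

lemma reed_solomon_code:
  assumes fin: "finite (carrier R)" and "0 < t" "t \<le> l" "l \<le> card (carrier R) + 1"
  shows "\<exists>\<Phi> \<subseteq> words (carrier R) l. card \<Phi> = card (carrier R) ^ t \<and>
           (\<forall>\<phi>\<in>\<Phi>. \<forall>\<psi>\<in>\<Phi>. \<phi> \<noteq> \<psi> \<longrightarrow> card (agreements l \<phi> \<psi>) \<le> t - 1)"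
proof -
  obtain xs where xs: "set xs = carrier R" "distinct xs" using finite_distinct_list[OF fin] by blast
  hence l: "l \<le> length xs + 1" using assms(4) distinct_card by metis
  define T where "T = words (carrier R) t"
  have agr: "card (agreements l (rs_word xs l cs) (rs_word xs l ds)) \<le> t - 1"
    if "cs \<in> T" "ds \<in> T" "cs \<noteq> ds" for cs ds
    using card_agreements_rs_word[OF _ xs(2) l] xs(1) that \<open>0 < t\<close> by (simp add: T_def)
  have "inj_on (rs_word xs l) T"
  proof (rule inj_onI, rule ccontr)
    fix cs ds assume "cs \<in> T" "ds \<in> T" "rs_word xs l cs = rs_word xs l ds" "cs \<noteq> ds"
    thus False using agr[of cs ds] \<open>t \<le> l\<close> \<open>0 < t\<close> by (simp add: agreements_def)
  qed
  moreover have "rs_word xs l ` T \<subseteq> words (carrier R) l"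
    using rs_word_in_words[OF _ l] xs(1) \<open>0 < t\<close> by (auto simp: T_def)
  ultimately show ?thesis
    using agr card_words[OF fin] by (intro exI[of _ "rs_word xs l ` T"]) (auto simp: card_image T_def)
qed

end

lemma exists_mds_code:
  assumes "primepow m" "0 < t" "t \<le> l" "l \<le> m + 1"
  shows "\<exists>\<Phi> \<subseteq> words {..<m} l. card \<Phi> = m ^ t \<and>
           (\<forall>\<phi>\<in>\<Phi>. \<forall>\<psi>\<in>\<Phi>. \<phi> \<noteq> \<psi> \<longrightarrow> card (agreements l \<phi> \<psi>) \<le> t - 1)"
proof -
  obtain p k where "Factorial_Ring.prime p" "0 < k" "m = p ^ k"
    using assms(1) by (auto simp: primepow_def)
  then obtain R :: "((int list \<times> nat) multiset \<Rightarrow> int) ring"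
    where "field R" and R: "finite (carrier R)" "card (carrier R) = m"
    using finite_field_exists by blast
  interpret R: field R by fact
  obtain \<Psi> where \<Psi>: "\<Psi> \<subseteq> words (carrier R) l" "card \<Psi> = m ^ t"
    "\<forall>\<phi>\<in>\<Psi>. \<forall>\<psi>\<in>\<Psi>. \<phi> \<noteq> \<psi> \<longrightarrow> card (agreements l \<phi> \<psi>) \<le> t - 1"
    using R.reed_solomon_code[OF R(1) assms(2,3)] R(2) assms(4) by auto
  obtain \<beta> where \<beta>: "bij_betw \<beta> (carrier R) {..<m}"
    using ex_bij_betw_finite_nat[OF R(1)] R(2) by (auto simp: atLeast0LessThan)
  hence inj: "inj_on \<beta> (carrier R)" by (rule bij_betw_imp_inj_on)
  have "map \<beta> ` \<Psi> \<subseteq> words {..<m} l"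
    using \<Psi>(1) bij_betw_imp_surj_on[OF \<beta>] by (fastforce simp: words_def)
  moreover have "inj_on (map \<beta>) \<Psi>"
    using \<Psi>(1) by (intro inj_on_mapI inj_on_subset[OF inj]) (auto simp: words_def)
  ultimately show ?thesis
    using \<Psi> agreements_map[OF inj] by (intro exI[of _ "map \<beta> ` \<Psi>"]) (auto simp: card_image subset_iff)
qed

section \<open>The concatenated code\<close>

lemma mult_add_inj:
  fixes a b u v m :: nat
  assumes "a * m + u = b * m + v" "u < m" "v < m"
  shows "a = b" "u = v"
proof -
  have "(a * m + u) div m = a" "(b * m + v) div m = b" "(a * m + u) mod m = u" "(b * m + v) mod m = v"
    using assms(2,3) by auto
  thus "a = b" "u = v" using assms(1) by metis+
qed

text \<open>The symbol \<open>\<omega>\<close> is the \<open>\<infinity>\<close> of Property P(t).\<close>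

locale concatenated_code =
  fixes S :: "'a set" and \<omega> :: 'a and C :: "'a list set" and \<Phi> :: "nat list set"
    and \<sigma> :: "'a \<Rightarrow> nat" and l t c m s :: nat
  assumes finite_alphabet: "finite S" and outer_words: "C \<subseteq> words S l"
    and few_infinities: "\<And>x. x \<in> C \<Longrightarrow> card {j. j < l \<and> x ! j = \<omega>} \<le> t - 1"
    and determined_by_t_entries: "\<And>x y J. x \<in> C \<Longrightarrow> y \<in> C \<Longrightarrow> J \<subseteq> {..<l} \<Longrightarrow> card J = t \<Longrightarrow>
          (\<forall>j\<in>J. x ! j = y ! j \<and> x ! j \<noteq> \<omega>) \<Longrightarrow> x = y"
    and inner_words: "\<Phi> \<subseteq> words {..<m} l"
    and inner_agreement: "\<And>\<phi> \<psi>. \<phi> \<in> \<Phi> \<Longrightarrow> \<psi> \<in> \<Phi> \<Longrightarrow> \<phi> \<noteq> \<psi> \<Longrightarrow>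
          card (agreements l \<phi> \<psi>) \<le> t - 1"
    and \<sigma>_inj: "inj_on \<sigma> (S - {\<omega>})"
    and \<sigma>_less: "\<And>a. a \<in> S - {\<omega>} \<Longrightarrow> \<sigma> a < s - 1"
    and c_ge_2: "2 \<le> c" and length_large: "(c + 1) * (t - 1) < l"
begin

definition enc :: "'a list \<Rightarrow> nat list \<Rightarrow> nat list" where
  "enc x \<phi> = map (\<lambda>j. if x ! j = \<omega> then 0 else \<sigma> (x ! j) * m + \<phi> ! j + 1) [0..<l]"

definition code :: "nat list set" where
  "code = (\<lambda>(x, \<phi>). enc x \<phi>) ` (C \<times> \<Phi>)"

definition proper_coords :: "'a list \<Rightarrow> nat set" where
  "proper_coords x = {j. j < l \<and> x ! j \<noteq> \<omega>}"

lemma enc_nth: "j < l \<Longrightarrow> enc x \<phi> ! j = (if x ! j = \<omega> then 0 else \<sigma> (x ! j) * m + \<phi> ! j + 1)"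
  by (simp add: enc_def)

lemma outer_nth: "x \<in> C \<Longrightarrow> j < l \<Longrightarrow> x ! j \<in> S"
  using outer_words by (auto simp: words_iff_nth)

lemma inner_nth: "\<phi> \<in> \<Phi> \<Longrightarrow> j < l \<Longrightarrow> \<phi> ! j < m"
  using inner_words by (auto simp: words_iff_nth)

lemma enc_in_words:
  assumes "x \<in> C" "\<phi> \<in> \<Phi>"
  shows "enc x \<phi> \<in> words {..<(s - 1) * m + 1} l"
proof -
  have "enc x \<phi> ! j < (s - 1) * m + 1" if "j < l" for j
  proof (cases "x ! j = \<omega>")
    case False
    with assms(1) that have "x ! j \<in> S - {\<omega>}" using outer_nth by blast
    hence "(\<sigma> (x ! j) + 1) * m \<le> (s - 1) * m" using \<sigma>_less[of "x ! j"] by (intro mult_right_mono) auto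
    moreover have "\<phi> ! j < m" using inner_nth assms(2) that by blast
    ultimately show ?thesis using False that by (simp add: enc_nth)
  qed (simp add: enc_nth that)
  thus ?thesis by (simp add: words_iff_nth enc_def)
qed

lemma enc_eq_at_proper_coord:
  assumes "x \<in> C" "y \<in> C" "\<phi> \<in> \<Phi>" "\<psi> \<in> \<Phi>" "j \<in> proper_coords x"
    and "enc x \<phi> ! j = enc y \<psi> ! j"
  shows "x ! j = y ! j" "\<phi> ! j = \<psi> ! j"
proof -
  from assms(5) have j: "j < l" "x ! j \<noteq> \<omega>" by (auto simp: proper_coords_def)
  with assms(6) have "y ! j \<noteq> \<omega>" by (auto simp: enc_nth)
  with assms j have "\<sigma> (x ! j) * m + \<phi> ! j = \<sigma> (y ! j) * m + \<psi> ! j"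
    by (simp add: enc_nth)
  from mult_add_inj[OF this inner_nth[OF assms(3) j(1)] inner_nth[OF assms(4) j(1)]]
  have "\<sigma> (x ! j) = \<sigma> (y ! j)" and "\<phi> ! j = \<psi> ! j" .
  moreover have "x ! j \<in> S - {\<omega>}" "y ! j \<in> S - {\<omega>}"
    using outer_nth assms(1,2) j \<open>y ! j \<noteq> \<omega>\<close> by auto
  ultimately show "x ! j = y ! j" "\<phi> ! j = \<psi> ! j"
    using inj_onD[OF \<sigma>_inj] by auto
qed

lemma card_proper_coords:
  assumes "x \<in> C"
  shows "c * (t - 1) < card (proper_coords x)"
proof -
  have "proper_coords x = {..<l} - {j. j < l \<and> x ! j = \<omega>}"
    by (auto simp: proper_coords_def)
  hence "card (proper_coords x) = l - card {j. j < l \<and> x ! j = \<omega>}"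
    by (simp add: card_Diff_subset subset_eq)
  moreover have "(c + 1) * (t - 1) = c * (t - 1) + (t - 1)" by simp
  ultimately show ?thesis using few_infinities[OF assms] length_large by linarith
qed

text \<open>For distinct outer codewords this is Property P(t), for equal ones the distance of the
  inner code.\<close>

lemma card_enc_agreement:
  assumes "x \<in> C" "y \<in> C" "\<phi> \<in> \<Phi>" "\<psi> \<in> \<Phi>" "(x, \<phi>) \<noteq> (y, \<psi>)"
  shows "card {j \<in> proper_coords x. enc x \<phi> ! j = enc y \<psi> ! j} \<le> t - 1"
    (is "card ?A \<le> _")
proof (cases "x = y")
  case True
  have "?A \<subseteq> agreements l \<phi> \<psi>"
  proof
    fix j assume "j \<in> ?A"
    hence "j < l" "\<phi> ! j = \<psi> ! j"
      using enc_eq_at_proper_coord(2)[OF assms(1-4)] by (auto simp: proper_coords_def)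
    thus "j \<in> agreements l \<phi> \<psi>" by (simp add: agreements_def)
  qed
  hence "card ?A \<le> card (agreements l \<phi> \<psi>)" by (intro card_mono) auto
  also have "\<dots> \<le> t - 1" using True assms inner_agreement by blast
  finally show ?thesis .
next
  case False
  show ?thesis
  proof (rule ccontr)
    assume "\<not> card ?A \<le> t - 1"
    hence "t \<le> card ?A" by linarith
    then obtain J where J: "J \<subseteq> ?A" "card J = t" by (rule obtain_subset_with_card_n)
    have "J \<subseteq> {..<l}" using J(1) by (auto simp: proper_coords_def)
    moreover have "x ! j = y ! j \<and> x ! j \<noteq> \<omega>" if "j \<in> J" for j
    proof -
      have j: "j \<in> proper_coords x" "enc x \<phi> ! j = enc y \<psi> ! j" using J(1) that by auto
      hence "x ! j = y ! j" by (rule enc_eq_at_proper_coord(1)[OF assms(1-4)])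
      moreover have "x ! j \<noteq> \<omega>" using j(1) by (simp add: proper_coords_def)
      ultimately show ?thesis ..
    qed
    ultimately show False using determined_by_t_entries[OF assms(1,2) _ J(2)] False by blast
  qed
qed

lemma inj_on_enc: "inj_on (\<lambda>(x, \<phi>). enc x \<phi>) (C \<times> \<Phi>)"
proof (rule inj_onI, clarify)
  fix x \<phi> y \<psi> assume xy: "x \<in> C" "\<phi> \<in> \<Phi>" "y \<in> C" "\<psi> \<in> \<Phi>" and eq: "enc x \<phi> = enc y \<psi>"
  have "{j \<in> proper_coords x. enc x \<phi> ! j = enc y \<psi> ! j} = proper_coords x"
    using eq by simp
  moreover have "t - 1 \<le> c * (t - 1)" using c_ge_2 by simp
  hence "t - 1 < card (proper_coords x)" using card_proper_coords[OF xy(1)] by linarith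
  ultimately show "x = y \<and> \<phi> = \<psi>"
    using card_enc_agreement[OF xy(1,3,2,4)] by fastforce
qed

lemma card_code: "card code = card C * card \<Phi>"
  unfolding code_def by (simp add: card_image[OF inj_on_enc] card_cartesian_product)

lemma finite_code: "finite code"
proof -
  have "finite C" using finite_subset[OF outer_words finite_words[OF finite_alphabet]] .
  moreover have "finite \<Phi>" using finite_subset[OF inner_words finite_words] by simp
  ultimately show ?thesis by (simp add: code_def)
qed

lemma frameproof_code: "frameproof {..<(s - 1) * m + 1} l c code"
proof -
  have "z \<in> P" if P: "P \<subseteq> code" "card P \<le> c" and z: "z \<in> desc {..<(s - 1) * m + 1} l P" "z \<in> code"
    for P z
  proof (rule ccontr)
    assume "z \<notin> P"
    obtain x \<phi> where x\<phi>: "x \<in> C" "\<phi> \<in> \<Phi>" "z = enc x \<phi>" using z(2) by (auto simp: code_def)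
    define A where "A y = {j \<in> proper_coords x. z ! j = y ! j}" for y
    have "finite P" using P(1) finite_code finite_subset by blast
    have "proper_coords x \<subseteq> (\<Union>y\<in>P. A y)"
      using z(1) by (auto simp: A_def desc_def proper_coords_def)
    hence "card (proper_coords x) \<le> card (\<Union>y\<in>P. A y)"
      by (intro card_mono) (auto simp: A_def proper_coords_def \<open>finite P\<close>)
    also have "\<dots> \<le> (\<Sum>y\<in>P. card (A y))" by (rule card_UN_le[OF \<open>finite P\<close>])
    also have "\<dots> \<le> (\<Sum>y\<in>P. t - 1)"
    proof (rule sum_mono)
      fix y assume "y \<in> P"
      then obtain x' \<psi> where "x' \<in> C" "\<psi> \<in> \<Phi>" "y = enc x' \<psi>" using P(1) by (auto simp: code_def)
      with x\<phi> \<open>z \<notin> P\<close> \<open>y \<in> P\<close> show "card (A y) \<le> t - 1"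
        using card_enc_agreement[of x x' \<phi> \<psi>] by (auto simp: A_def)
    qed
    also have "\<dots> \<le> c * (t - 1)" using P(2) by simp
    finally show False using card_proper_coords[OF x\<phi>(1)] by linarith
  qed
  moreover have "code \<subseteq> words {..<(s - 1) * m + 1} l"
    using enc_in_words by (auto simp: code_def)
  ultimately show ?thesis
    using c_ge_2 by (auto simp: frameproof_def desc_def)
qed

end

lemma frameproof_concatenation:
  assumes "qary_frameproof s S l c C" "property_P t S l C" "(c + 1) * (t - 1) < l"
    and "\<Phi> \<subseteq> words {..<m} l"
    and "\<forall>\<phi>\<in>\<Phi>. \<forall>\<psi>\<in>\<Phi>. \<phi> \<noteq> \<psi> \<longrightarrow> card (agreements l \<phi> \<psi>) \<le> t - 1"
  shows "\<exists>D. qary_frameproof ((s - 1) * m + 1) {..<(s - 1) * m + 1} l c D \<and> card D = card C * card \<Phi>"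
proof -
  from assms(1) have S: "finite S" "card S = s" "2 \<le> c" "C \<subseteq> words S l"
    by (auto simp: qary_frameproof_def frameproof_def)
  from assms(2) obtain \<omega> where "\<omega> \<in> S"
    and P: "\<forall>x\<in>C. card {j. j < l \<and> x ! j = \<omega>} \<le> t - 1"
      "\<forall>x\<in>C. \<forall>y\<in>C. (\<exists>J. J \<subseteq> {..<l} \<and> card J = t \<and> (\<forall>j\<in>J. x ! j = y ! j \<and> x ! j \<noteq> \<omega>)) \<longrightarrow> x = y"
    unfolding property_P_def by blast
  obtain \<sigma> where \<sigma>: "bij_betw \<sigma> (S - {\<omega>}) {0..<s - 1}"
    using ex_bij_betw_finite_nat[of "S - {\<omega>}"] S \<open>\<omega> \<in> S\<close> by auto
  interpret concatenated_code S \<omega> C \<Phi> \<sigma> l t c m s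
  proof unfold_locales
    show "inj_on \<sigma> (S - {\<omega>})" using \<sigma> by (rule bij_betw_imp_inj_on)
    show "\<sigma> a < s - 1" if "a \<in> S - {\<omega>}" for a using bij_betw_apply[OF \<sigma> that] by simp
    show "x = y" if "x \<in> C" "y \<in> C" "J \<subseteq> {..<l}" "card J = t"
      "\<forall>j\<in>J. x ! j = y ! j \<and> x ! j \<noteq> \<omega>" for x y J
      using P(2) that by blast
  qed (use S assms(3-5) P in auto)
  show ?thesis
    using frameproof_code card_code by (intro exI[of _ code]) (simp add: qary_frameproof_def)
qed

theorem lemma1:
  fixes m l s t c r M :: nat and S :: "'a set" and C :: "'a list set"
  assumes "primepow m"
    and "l > 0" and "s > 0" and "t > 0"
    and "l \<le> m + 1"
    and "2 * t - 1 \<le> l"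
    and "c \<ge> t"
    and "l = c * (t - 1) + r" and "t \<le> r" and "r \<le> c"
    and "qary_frameproof s S l c C" and "card C = M" and "property_P t S l C"
  shows "\<exists>(F :: nat set) (D :: nat list set).
           qary_frameproof ((s - 1) * m + 1) F l c D \<and> card D = M * m ^ t"
proof -
  obtain \<Phi> where \<Phi>: "\<Phi> \<subseteq> words {..<m} l" "card \<Phi> = m ^ t"
    "\<forall>\<phi>\<in>\<Phi>. \<forall>\<psi>\<in>\<Phi>. \<phi> \<noteq> \<psi> \<longrightarrow> card (agreements l \<phi> \<psi>) \<le> t - 1"
    using exists_mds_code[of m t l] assms(1,4-6) by (auto simp: le_diff_conv)
  have "(c + 1) * (t - 1) = c * (t - 1) + (t - 1)" by simp
  hence "(c + 1) * (t - 1) < l" using assms(4,8,9) by linarith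
  then obtain D where "qary_frameproof ((s - 1) * m + 1) {..<(s - 1) * m + 1} l c D"
    and "card D = card C * card \<Phi>"
    using frameproof_concatenation[OF assms(11,13) _ \<Phi>(1,3)] by blast
  thus ?thesis using \<Phi>(2) assms(12) by auto
qed

end
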